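(* For every integer $k\ge 1$, every $\mathcal{O}_k$-free graph $G$ of girth at least 11 has average degree $2|E(G)|/|V(G)|$ at most $2k$.
   Context: All graphs are finite, simple and nonempty. Two vertex-disjoint subgraphs are independent if there is no edge between them. A graph $G$ is $\mathcal{O}_k$-free if it does not contain $k$ pairwise vertex-disjoint and pairwise independent cycles; equivalently, $G$ has no induced subgraph isomorphic to a disjoint union of $k$ cycles. The girth is the minimum length of a cycle (infinite for forests). *)

theory Defs
  imports Complex_Main
begin

definition simple_graph :: "'a set \<Rightarrow> ('a \<Rightarrow> 'a \<Rightarrow> bool) \<Rightarrow> bool" where
  "simple_graph V E \<longleftrightarrow> finite V \<and> V \<noteq> {} \<and>
     (\<forall>u v. E u v \<longrightarrow> u \<in> V \<and> v \<in> V) \<and>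
     (\<forall>u v. E u v \<longrightarrow> E v u) \<and> (\<forall>u. \<not> E u u)"

definition edges :: "('a \<Rightarrow> 'a \<Rightarrow> bool) \<Rightarrow> 'a set set" where
  "edges E = {{u, v} | u v. E u v}"

definition is_cycle :: "'a set \<Rightarrow> ('a \<Rightarrow> 'a \<Rightarrow> bool) \<Rightarrow> 'a list \<Rightarrow> bool" where
  "is_cycle V E cs \<longleftrightarrow> length cs \<ge> 3 \<and> distinct cs \<and> set cs \<subseteq> V \<and>
     (\<forall>i < length cs. E (cs ! i) (cs ! ((i + 1) mod length cs)))"

definition girth_at_least :: "'a set \<Rightarrow> ('a \<Rightarrow> 'a \<Rightarrow> bool) \<Rightarrow> nat \<Rightarrow> bool" where
  "girth_at_least V E g \<longleftrightarrow> (\<forall>cs. is_cycle V E cs \<longrightarrow> length cs \<ge> g)"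

definition independent_sets :: "('a \<Rightarrow> 'a \<Rightarrow> bool) \<Rightarrow> 'a set \<Rightarrow> 'a set \<Rightarrow> bool" where
  "independent_sets E A B \<longleftrightarrow> (\<forall>a\<in>A. \<forall>b\<in>B. \<not> E a b)"

definition O_free :: "'a set \<Rightarrow> ('a \<Rightarrow> 'a \<Rightarrow> bool) \<Rightarrow> nat \<Rightarrow> bool" where
  "O_free V E k \<longleftrightarrow> \<not> (\<exists>Cs :: 'a list list. length Cs = k \<and>
      (\<forall>i < k. is_cycle V E (Cs ! i)) \<and>
      (\<forall>i < k. \<forall>j < k. i \<noteq> j \<longrightarrow>
          set (Cs ! i) \<inter> set (Cs ! j) = {} \<and>
          independent_sets E (set (Cs ! i)) (set (Cs ! j))))"

end

theory Submission
  imports Defs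
begin

text \<open>If \<open>|E| > k|V|\<close>, deleting vertices of degree at most \<open>k\<close> one at a time leaves a
nonempty subgraph \<open>H\<close> of minimum degree at least \<open>k + 1\<close>. Let \<open>C\<close> be a shortest cycle of \<open>H\<close>
and \<open>N[C]\<close> its closed neighbourhood. Girth at least 9 (all the argument uses) implies that a
vertex outside \<open>N[C]\<close> has at most one neighbour in \<open>N[C]\<close>: two would close either a 4-cycle
or a detour of at most three vertices between two vertices of \<open>C\<close>, which together with the
shorter arc of \<open>C\<close> is a cycle shorter than \<open>C\<close>. Hence \<open>H - N[C]\<close> has minimum degree at least
\<open>k\<close> (and is nonempty when \<open>k \<ge> 2\<close>), and by induction it contains \<open>k - 1\<close> pairwise disjoint,
independent cycles, all independent from \<open>C\<close>.\<close>

definition cycle :: "('a \<Rightarrow> 'a \<Rightarrow> bool) \<Rightarrow> 'a list \<Rightarrow> bool" where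
  "cycle E cs \<longleftrightarrow> 3 \<le> length cs \<and> distinct cs \<and> successively E cs \<and> E (last cs) (hd cs)"

lemma is_cycle_iff_cycle: "is_cycle V E cs \<longleftrightarrow> cycle E cs \<and> set cs \<subseteq> V"
proof
  assume H: "is_cycle V E cs"
  hence L: "length cs \<ge> 3" and S: "\<forall>i < length cs. E (cs ! i) (cs ! ((i + 1) mod length cs))"
    by (auto simp: is_cycle_def)
  have "successively E cs"
    unfolding successively_conv_nth
  proof (intro allI impI)
    fix i assume "Suc i < length cs"
    thus "E (cs ! i) (cs ! Suc i)" using S[rule_format, of i] by simp
  qed
  moreover have "E (last cs) (hd cs)"
  proof -
    have "E (cs ! (length cs - 1)) (cs ! ((length cs - 1 + 1) mod length cs))"
      using S L by auto
    moreover have "length cs - 1 + 1 = length cs" using L by arith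
    moreover have "cs \<noteq> []" using L by auto
    ultimately show ?thesis by (simp add: last_conv_nth hd_conv_nth)
  qed
  ultimately show "cycle E cs \<and> set cs \<subseteq> V" using H by (auto simp: is_cycle_def cycle_def)
next
  assume H: "cycle E cs \<and> set cs \<subseteq> V"
  hence L: "length cs \<ge> 3" and S: "successively E cs" and Z: "E (last cs) (hd cs)"
    by (auto simp: cycle_def)
  have "\<forall>i < length cs. E (cs ! i) (cs ! ((i + 1) mod length cs))"
  proof (intro allI impI)
    fix i assume i: "i < length cs"
    show "E (cs ! i) (cs ! ((i + 1) mod length cs))"
    proof (cases "Suc i < length cs")
      case True thus ?thesis using successively_nth[OF S True] by simp
    next
      case False
      hence "i = length cs - 1" "i + 1 = length cs" using i by simp_all
      moreover have "cs \<noteq> []" using L by auto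
      ultimately show ?thesis using Z by (simp add: last_conv_nth hd_conv_nth)
    qed
  qed
  thus "is_cycle V E cs" using H by (auto simp: is_cycle_def cycle_def)
qed

lemma cycle_rotate1:
  assumes "cycle E cs" shows "cycle E (rotate1 cs)"
proof -
  obtain x xs where cs: "cs = x # xs" using assms by (cases cs) (auto simp: cycle_def)
  have "xs \<noteq> []" using assms cs by (auto simp: cycle_def)
  thus ?thesis using assms unfolding cs cycle_def
    by (auto simp: successively_append_iff successively_Cons)
qed

lemma cycle_rotate: "cycle E cs \<Longrightarrow> cycle E (rotate n cs)"
  by (induction n) (auto intro: cycle_rotate1)

lemma successively_take: "successively E xs \<Longrightarrow> successively E (take n xs)"
  by (metis append_take_drop_id successively_append_iff)

lemma successively_drop: "successively E xs \<Longrightarrow> successively E (drop n xs)"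
  by (metis append_take_drop_id successively_append_iff)

definition path_between :: "('a \<Rightarrow> 'a \<Rightarrow> bool) \<Rightarrow> 'a \<Rightarrow> 'a \<Rightarrow> 'a list \<Rightarrow> bool" where
  "path_between E a b P \<longleftrightarrow> P \<noteq> [] \<and> hd P = a \<and> last P = b \<and> distinct P \<and> successively E P"

lemma path_between_take:
  assumes "distinct xs" "successively E xs" "j < length xs"
  shows "path_between E (hd xs) (xs ! j) (take (Suc j) xs)"
proof -
  have "hd (take (Suc j) xs) = hd xs" by (cases xs) simp_all
  moreover have "last (take (Suc j) xs) = xs ! j" using assms(3) by (simp add: take_Suc_conv_app_nth)
  ultimately show ?thesis using assms by (auto simp: path_between_def successively_take)
qed

lemma cycle_drop_path:
  assumes "symp E" "cycle E C" "1 \<le> j" "j < length C"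
  shows "path_between E (hd C) (C ! j) (hd C # rev (drop j C))"
proof -
  have ne: "C \<noteq> []" and d: "distinct C" using assms(2) by (auto simp: cycle_def)
  have "hd C \<notin> set (drop j C)"
    using d ne assms(3) by (cases C) (auto simp: drop_Cons' dest: in_set_dropD)
  moreover have "successively E (drop j C)" using assms(2) by (simp add: cycle_def successively_drop)
  hence "successively (\<lambda>x y. E y x) (drop j C)"
    by (rule successively_mono) (use assms(1) in \<open>blast dest: sympD\<close>)
  moreover have "E (hd C) (last C)" using assms(1,2) by (auto simp: cycle_def dest: sympD)
  moreover have "hd (drop j C) = C ! j" using assms by (simp add: hd_drop_conv_nth)
  ultimately show ?thesis
    using assms d by (auto simp: path_between_def successively_Cons hd_rev last_rev)
qed

lemma cycle_short_path_from_hd: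
  assumes "symp E" "cycle E C" "1 \<le> j" "j < length C"
  shows "\<exists>P. path_between E (hd C) (C ! j) P \<and> set P \<subseteq> set C \<and> 2 * length P \<le> length C + 2"
proof (cases "2 * Suc j \<le> length C + 2")
  case True
  thus ?thesis using path_between_take[of C E j] assms(2,4)
    by (intro exI[of _ "take (Suc j) C"]) (auto simp: cycle_def dest: in_set_takeD)
next
  case False
  have "hd C \<in> set C" using assms(4) by (cases C) auto
  thus ?thesis using False cycle_drop_path[OF assms] assms(4)
    by (intro exI[of _ "hd C # rev (drop j C)"]) (auto dest: in_set_dropD)
qed

lemma cycle_short_path:
  assumes "symp E" "cycle E C" "a \<in> set C" "b \<in> set C" "a \<noteq> b"
  shows "\<exists>P. path_between E a b P \<and> set P \<subseteq> set C \<and> 2 * length P \<le> length C + 2"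
proof -
  obtain n where n: "n < length C" "C ! n = a" using assms(3) by (auto simp: in_set_conv_nth)
  define C' where "C' = rotate n C"
  have "cycle E C'" using assms(2) cycle_rotate C'_def by blast
  moreover have "C \<noteq> []" using n by auto
  hence h: "hd C' = a" using n hd_rotate_conv_nth[of C n] by (simp add: C'_def)
  moreover have "b \<in> set C'" using assms(4) by (simp add: C'_def)
  then obtain j where j: "j < length C'" "C' ! j = b" by (auto simp: in_set_conv_nth)
  moreover have "j \<noteq> 0" using j h assms(5) by (metis hd_conv_nth length_0_conv not_less0)
  ultimately show ?thesis using cycle_short_path_from_hd[OF assms(1), of C' j] by (auto simp: C'_def)
qed

lemma path_close_cycle:
  "path_between E a b P \<Longrightarrow> 3 \<le> length P \<Longrightarrow> E b a \<Longrightarrow> cycle E P"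
  by (simp add: path_between_def cycle_def)

lemma path_append_cycle:
  assumes "path_between E a b P" "a \<noteq> b" "Q \<noteq> []" "distinct Q" "set Q \<inter> set P = {}"
    "successively E Q" "E b (hd Q)" "E (last Q) a"
  shows "cycle E (P @ Q)"
proof -
  have "2 \<le> length P" using assms(1,2)
    by (cases P rule: remdups_adj.cases) (auto simp: path_between_def)
  moreover have "1 \<le> length Q" using assms(3) by (cases Q) auto
  ultimately show ?thesis using assms unfolding cycle_def path_between_def
    by (auto simp: successively_append_iff)
qed

definition shortest_cycle_in :: "('a \<Rightarrow> 'a \<Rightarrow> bool) \<Rightarrow> 'a set \<Rightarrow> 'a list \<Rightarrow> bool" where
  "shortest_cycle_in E U C \<longleftrightarrow> cycle E C \<and> set C \<subseteq> U \<and>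
     (\<forall>C'. cycle E C' \<and> set C' \<subseteq> U \<longrightarrow> length C \<le> length C')"

lemma exists_shortest_cycle_in:
  "cycle E C0 \<Longrightarrow> set C0 \<subseteq> U \<Longrightarrow> \<exists>C. shortest_cycle_in E U C"
  unfolding shortest_cycle_in_def
  using ex_has_least_nat[of "\<lambda>C. cycle E C \<and> set C \<subseteq> U" C0 length] by blast

lemma shortest_cycle_detour:
  assumes "symp E" "shortest_cycle_in E U C" "a \<in> set C" "b \<in> set C" "a \<noteq> b"
    and "Q \<noteq> []" "distinct Q" "set Q \<subseteq> U - set C" "successively E Q" "E b (hd Q)" "E (last Q) a"
  shows "length C \<le> 2 * length Q + 2"
proof -
  have C: "cycle E C" "set C \<subseteq> U" using assms(2) by (auto simp: shortest_cycle_in_def)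
  obtain P where P: "path_between E a b P" "set P \<subseteq> set C" "2 * length P \<le> length C + 2"
    using cycle_short_path[OF assms(1) C(1) assms(3-5)] by blast
  have "cycle E (P @ Q)" using path_append_cycle[OF P(1) assms(5-7) _ assms(9-11)] P(2) assms(8) by blast
  moreover have "set (P @ Q) \<subseteq> U" using P(2) C(2) assms(8) by auto
  ultimately have "length C \<le> length P + length Q"
    using assms(2) unfolding shortest_cycle_in_def by fastforce
  thus ?thesis using P(3) by linarith
qed

text \<open>The two arcs of \<open>C\<close> cut off by a chord both close to cycles, and their lengths add up
to \<open>length C + 2\<close>.\<close>

lemma shortest_cycle_hd_neighbour:
  assumes "symp E" "shortest_cycle_in E U C" "z \<in> set C" "z \<noteq> hd C" "E (hd C) z"
  shows "z = C ! 1 \<or> z = last C"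
proof (rule ccontr)
  assume z: "\<not> (z = C ! 1 \<or> z = last C)"
  have C: "cycle E C" and sU: "set C \<subseteq> U" and Cne: "C \<noteq> []"
    using assms(2) by (auto simp: shortest_cycle_in_def cycle_def)
  have sh: "length C \<le> length C'" if "cycle E C'" "set C' \<subseteq> set C" for C'
    using assms(2) that sU unfolding shortest_cycle_in_def by blast
  obtain j where j: "j < length C" "C ! j = z" using assms(3) by (auto simp: in_set_conv_nth)
  have "j \<noteq> 0"
  proof
    assume "j = 0"
    hence "z = hd C" using j Cne by (simp add: hd_conv_nth)
    thus False using assms(4) by contradiction
  qed
  moreover have "j \<noteq> 1" "j \<noteq> length C - 1" using j z Cne by (auto simp: last_conv_nth)
  ultimately have j2: "2 \<le> j" "j + 2 \<le> length C" using j by auto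
  have Ezc: "E z (hd C)" using assms(1,5) by (blast dest: sympD)
  have "cycle E (take (Suc j) C)"
    using path_close_cycle[OF path_between_take[of C E j]] C j j2 Ezc by (simp add: cycle_def)
  hence "length C \<le> Suc j" using sh[of "take (Suc j) C"] j by (simp add: set_take_subset)
  moreover have "cycle E (hd C # rev (drop j C))"
    using path_close_cycle[OF cycle_drop_path[OF assms(1) C, of j]] j j2 Ezc by simp
  hence "length C \<le> length C - j + 1"
    using sh[of "hd C # rev (drop j C)"] j Cne by (auto dest: in_set_dropD)
  ultimately show False using j2 by linarith
qed

definition path_in :: "('a \<Rightarrow> 'a \<Rightarrow> bool) \<Rightarrow> 'a set \<Rightarrow> 'a list \<Rightarrow> bool" where
  "path_in E U xs \<longleftrightarrow> xs \<noteq> [] \<and> distinct xs \<and> set xs \<subseteq> U \<and> successively E xs"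

lemma exists_longest_path_in:
  assumes "finite U" "U \<noteq> {}"
  shows "\<exists>p. path_in E U p \<and> (\<forall>q. path_in E U q \<longrightarrow> length q \<le> length p)"
proof -
  obtain v where "v \<in> U" using assms(2) by blast
  hence "path_in E U [v]" by (simp add: path_in_def)
  moreover have "length q < card U + 1" if "path_in E U q" for q
    using that card_mono[OF assms(1), of "set q"] by (auto simp: path_in_def distinct_card)
  ultimately show ?thesis using ex_has_greatest_nat[of "path_in E U" "[v]" length "card U + 1"] by blast
qed

lemma longest_path_in_hd_neighbour:
  assumes "symp E" "path_in E U p" "\<forall>q. path_in E U q \<longrightarrow> length q \<le> length p"
    and "u \<in> U" "E (hd p) u"
  shows "u \<in> set p"
proof (rule ccontr)
  assume "u \<notin> set p"
  moreover have "E u (hd p)" using assms(1,5) by (blast dest: sympD)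
  ultimately have "path_in E U (u # p)" using assms(2,4) by (auto simp: path_in_def successively_Cons)
  thus False using assms(3) by fastforce
qed

definition min_degree_ge :: "('a \<Rightarrow> 'a \<Rightarrow> bool) \<Rightarrow> 'a set \<Rightarrow> nat \<Rightarrow> bool" where
  "min_degree_ge E U d \<longleftrightarrow> (\<forall>v\<in>U. d \<le> card {u\<in>U. E v u})"

definition cycle_nbhd :: "('a \<Rightarrow> 'a \<Rightarrow> bool) \<Rightarrow> 'a list \<Rightarrow> 'a set \<Rightarrow> 'a set" where
  "cycle_nbhd E C U = {x \<in> U. x \<in> set C \<or> (\<exists>c\<in>set C. E x c)}"

definition independent_cycles :: "('a \<Rightarrow> 'a \<Rightarrow> bool) \<Rightarrow> 'a set \<Rightarrow> 'a list list \<Rightarrow> bool" where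
  "independent_cycles E U Cs \<longleftrightarrow> (\<forall>i<length Cs. cycle E (Cs!i) \<and> set (Cs!i) \<subseteq> U) \<and>
     (\<forall>i<length Cs. \<forall>j<length Cs. i \<noteq> j \<longrightarrow> set (Cs!i) \<inter> set (Cs!j) = {} \<and>
        independent_sets E (set (Cs!i)) (set (Cs!j)))"

lemma O_free_iff_no_independent_cycles:
  "O_free V E k \<longleftrightarrow> \<not> (\<exists>Cs. length Cs = k \<and> independent_cycles E V Cs)"
  unfolding O_free_def independent_cycles_def is_cycle_iff_cycle by (rule arg_cong[of _ _ Not]) auto

lemma independent_cycles_mono: "independent_cycles E U Cs \<Longrightarrow> U \<subseteq> W \<Longrightarrow> independent_cycles E W Cs"
  unfolding independent_cycles_def by blast

lemma independent_cycles_Cons: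
  assumes Cs: "independent_cycles E U' Cs" and C: "cycle E C" "set C \<subseteq> U" and "U' \<subseteq> U"
    and "U' \<inter> set C = {}" "independent_sets E U' (set C)" "independent_sets E (set C) U'"
  shows "independent_cycles E U (C # Cs)"
proof -
  let ?sep = "\<lambda>A B. A \<inter> B = {} \<and> independent_sets E A B"
  have C_Cs: "?sep (set C) (set (Cs ! n)) \<and> ?sep (set (Cs ! n)) (set C)" if "n < length Cs" for n
  proof -
    have "set (Cs ! n) \<subseteq> U'" using Cs that by (auto simp: independent_cycles_def)
    thus ?thesis using assms(5-7) unfolding independent_sets_def by blast
  qed
  have "cycle E ((C # Cs) ! i) \<and> set ((C # Cs) ! i) \<subseteq> U" if "i < length (C # Cs)" for i
    using that Cs C \<open>U' \<subseteq> U\<close> by (cases i) (auto simp: independent_cycles_def)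
  moreover have "?sep (set ((C # Cs) ! i)) (set ((C # Cs) ! j))"
    if ij: "i < length (C # Cs)" "j < length (C # Cs)" "i \<noteq> j" for i j
  proof (cases i)
    case 0
    then obtain j' where "j = Suc j'" "j' < length Cs" using ij by (cases j) auto
    thus ?thesis using C_Cs 0 by simp
  next
    case (Suc i')
    show ?thesis
    proof (cases j)
      case 0
      thus ?thesis using C_Cs Suc ij by simp
    next
      case (Suc j')
      thus ?thesis using Cs \<open>i = Suc i'\<close> ij by (simp add: independent_cycles_def)
    qed
  qed
  ultimately show ?thesis by (simp add: independent_cycles_def)
qed

locale finite_simple_graph =
  fixes V :: "'a set" and E :: "'a \<Rightarrow> 'a \<Rightarrow> bool"
  assumes simple_graph: "simple_graph V E"
begin

lemma symp: "symp E"
  using simple_graph by (simp add: simple_graph_def symp_def)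

lemma irrefl: "\<not> E u u"
  using simple_graph by (simp add: simple_graph_def)

lemma finite_V: "finite V"
  using simple_graph by (simp add: simple_graph_def)

lemma exists_cycle_if_min_degree_2:
  assumes UV: "U \<subseteq> V" and "U \<noteq> {}" and deg: "min_degree_ge E U 2"
  shows "\<exists>C. cycle E C \<and> set C \<subseteq> U"
proof -
  have "finite U" using finite_V UV finite_subset by blast
  then obtain p where p: "path_in E U p" and longest: "\<forall>q. path_in E U q \<longrightarrow> length q \<le> length p"
    using exists_longest_path_in \<open>U \<noteq> {}\<close> by blast
  have pne: "p \<noteq> []" and pd: "distinct p" and pU: "set p \<subseteq> U" and ps: "successively E p"
    using p by (auto simp: path_in_def)
  define v where "v = hd p"
  have "v \<in> U" using pne pU by (auto simp: v_def)
  hence "\<not> {u\<in>U. E v u} \<subseteq> {p ! 1}" using deg card_mono[of "{p ! 1}" "{u\<in>U. E v u}"]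
    by (auto simp: min_degree_ge_def)
  then obtain u where u: "u \<in> U" "E v u" "u \<noteq> p ! 1" by blast
  obtain j where j: "j < length p" "p ! j = u"
    using longest_path_in_hd_neighbour[OF symp p longest u(1)] u(2)
    by (auto simp: v_def in_set_conv_nth)
  have "j \<noteq> 0"
  proof
    assume "j = 0"
    hence "u = v" using j pne by (simp add: v_def hd_conv_nth)
    thus False using u irrefl by simp
  qed
  moreover have "j \<noteq> 1" using j u by auto
  ultimately have j2: "2 \<le> j" by linarith
  have "path_between E v u (take (Suc j) p)"
    using path_between_take[OF pd ps j(1)] j(2) by (simp add: v_def)
  moreover have "E u v" using u symp by (blast dest: sympD)
  ultimately have "cycle E (take (Suc j) p)" using path_close_cycle j j2 by fastforce
  moreover have "set (take (Suc j) p) \<subseteq> U" using pU by (meson order_trans set_take_subset)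
  ultimately show ?thesis by blast
qed

definition edges_within :: "'a set \<Rightarrow> 'a set set" where
  "edges_within U = {e \<in> edges E. e \<subseteq> U}"

lemma card_edges_within_remove_vertex:
  assumes finU: "finite U" and v: "v \<in> U"
  shows "card (edges_within U) = card (edges_within (U - {v})) + card {u\<in>U. E v u}"
proof -
  have fin: "finite (edges_within W)" if "finite W" for W
    by (rule finite_subset[of _ "Pow W"]) (use that in \<open>auto simp: edges_within_def\<close>)
  have eq: "edges_within U = edges_within (U - {v}) \<union> (\<lambda>u. {v, u}) ` {u\<in>U. E v u}"
  proof (intro equalityI subsetI)
    fix e assume "e \<in> edges_within U"
    then obtain a b where e: "e = {a, b}" "E a b" "e \<subseteq> U" by (auto simp: edges_within_def edges_def)
    show "e \<in> edges_within (U - {v}) \<union> (\<lambda>u. {v, u}) ` {u\<in>U. E v u}"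
    proof (cases "v \<in> e")
      case True
      hence "v = a \<or> v = b" using e by auto
      moreover have "E b a" using e symp by (blast dest: sympD)
      moreover have "{b, a} = e" using e by auto
      ultimately show ?thesis using e by auto
    next
      case False
      thus ?thesis using e by (auto simp: edges_within_def edges_def)
    qed
  next
    fix e assume "e \<in> edges_within (U - {v}) \<union> (\<lambda>u. {v, u}) ` {u\<in>U. E v u}"
    thus "e \<in> edges_within U" using v by (auto simp: edges_within_def edges_def)
  qed
  have disj: "edges_within (U - {v}) \<inter> (\<lambda>u. {v, u}) ` {u\<in>U. E v u} = {}"
    by (auto simp: edges_within_def)
  have inj: "inj_on (\<lambda>u. {v, u}) {u\<in>U. E v u}"
    by (rule inj_onI) (auto simp: doubleton_eq_iff)
  have "card (edges_within U) = card (edges_within (U - {v})) + card ((\<lambda>u. {v, u}) ` {u\<in>U. E v u})"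
    unfolding eq by (rule card_Un_disjoint[OF fin _ disj]) (use finU in simp_all)
  thus ?thesis using card_image[OF inj] by simp
qed

lemma exists_subgraph_min_degree:
  "finite U \<Longrightarrow> k * card U < card (edges_within U) \<Longrightarrow>
    \<exists>W\<subseteq>U. W \<noteq> {} \<and> min_degree_ge E W (Suc k)"
proof (induction "card U" arbitrary: U rule: less_induct)
  case less
  show ?case
  proof (cases "min_degree_ge E U (Suc k)")
    case True
    have "edges_within {} = {}" by (auto simp: edges_within_def edges_def)
    hence "U \<noteq> {}" using less.prems by auto
    thus ?thesis using True by blast
  next
    case False
    then obtain v where v: "v \<in> U" "card {u\<in>U. E v u} \<le> k"
      unfolding min_degree_ge_def by (auto simp: not_less_eq_eq)
    have cU: "card U = Suc (card (U - {v}))" using card_Suc_Diff1[OF less.prems(1) v(1)] by simp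
    hence "k * card U = k * card (U - {v}) + k" by simp
    hence "k * card (U - {v}) < card (edges_within (U - {v}))"
      using less.prems(2) card_edges_within_remove_vertex[OF less.prems(1) v(1)] v(2) by linarith
    moreover have "card (U - {v}) < card U" "finite (U - {v})" using cU less.prems(1) by simp_all
    ultimately have "\<exists>W\<subseteq>U - {v}. W \<noteq> {} \<and> min_degree_ge E W (Suc k)"
      using less.hyps[of "U - {v}"] by simp
    thus ?thesis by blast
  qed
qed

end

locale girth9_graph = finite_simple_graph +
  assumes girth: "girth_at_least V E 9"
begin

lemma length_cycle_ge_9: "cycle E C \<Longrightarrow> set C \<subseteq> V \<Longrightarrow> 9 \<le> length C"
  using girth unfolding girth_at_least_def is_cycle_iff_cycle by blast

lemma shortest_cycle_no_short_detour:
  assumes "U \<subseteq> V" "shortest_cycle_in E U C" "a \<in> set C" "b \<in> set C" "a \<noteq> b"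
    and "Q \<noteq> []" "distinct Q" "set Q \<subseteq> U - set C" "successively E Q" "E b (hd Q)" "E (last Q) a"
    and "length Q \<le> 3"
  shows False
proof -
  have "9 \<le> length C" using length_cycle_ge_9 assms(1,2) unfolding shortest_cycle_in_def by blast
  thus False using shortest_cycle_detour[OF symp assms(2-11)] assms(12) by linarith
qed

lemma cycle_nbhd_unique_neighbour:
  assumes UV: "U \<subseteq> V" and C: "shortest_cycle_in E U C"
    and w: "w \<in> U - cycle_nbhd E C U" and xy: "x \<in> cycle_nbhd E C U" "y \<in> cycle_nbhd E C U"
    and wx: "E w x" and wy: "E w y"
  shows "x = y"
proof (rule ccontr)
  assume "x \<noteq> y"
  have xw: "E x w" using wx symp by (blast dest: sympD)
  have outside: "x \<notin> set C" "y \<notin> set C" "w \<notin> set C"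
    using w xy xw wy symp by (auto simp: cycle_nbhd_def dest: sympD)
  have "w \<noteq> x" "w \<noteq> y" using wx wy irrefl by auto
  have U: "set [x, w, y] \<subseteq> U - set C" using w xy outside by (auto simp: cycle_nbhd_def)
  obtain c1 c2 where c: "c1 \<in> set C" "E c1 x" "c2 \<in> set C" "E y c2"
    using xy outside(1,2) symp by (auto simp: cycle_nbhd_def dest: sympD)
  show False
  proof (cases "c1 = c2")
    case True
    have "cycle E [c1, x, w, y]" unfolding cycle_def
      using outside c True \<open>x \<noteq> y\<close> \<open>w \<noteq> x\<close> \<open>w \<noteq> y\<close> xw wy by auto
    moreover have "set [c1, x, w, y] \<subseteq> V" using U c(1) C UV by (auto simp: shortest_cycle_in_def)
    ultimately show False using length_cycle_ge_9 by fastforce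
  next
    case False
    show False
      by (rule shortest_cycle_no_short_detour[OF UV C c(3,1) False[symmetric] _ _ U])
         (use outside c \<open>x \<noteq> y\<close> \<open>w \<noteq> x\<close> \<open>w \<noteq> y\<close> xw wy in auto)
  qed
qed

lemma min_degree_Diff_cycle_nbhd:
  assumes UV: "U \<subseteq> V" and C: "shortest_cycle_in E U C" and deg: "min_degree_ge E U (Suc d)"
  shows "min_degree_ge E (U - cycle_nbhd E C U) d"
  unfolding min_degree_ge_def
proof
  fix w assume w: "w \<in> U - cycle_nbhd E C U"
  let ?X = "{x \<in> cycle_nbhd E C U. E w x}"
  have "finite ?X" using finite_subset[OF _ finite_V, of ?X] UV by (auto simp: cycle_nbhd_def)
  hence "card ?X \<le> 1"
    using card_le_Suc0_iff_eq cycle_nbhd_unique_neighbour[OF UV C w] by fastforce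
  moreover have "{u\<in>U. E w u} = {u \<in> U - cycle_nbhd E C U. E w u} \<union> ?X"
    by (auto simp: cycle_nbhd_def)
  hence "card {u\<in>U. E w u} \<le> card {u \<in> U - cycle_nbhd E C U. E w u} + card ?X"
    by (simp add: card_Un_le)
  moreover have "Suc d \<le> card {u\<in>U. E w u}" using deg w by (simp add: min_degree_ge_def)
  ultimately show "d \<le> card {u \<in> U - cycle_nbhd E C U. E w u}" by linarith
qed

lemma shortest_cycle_hd_neighbour_outside:
  assumes UV: "U \<subseteq> V" and C: "shortest_cycle_in E U C" and deg: "min_degree_ge E U 3"
  shows "\<exists>z\<in>U - set C. E (hd C) z"
proof -
  have "C \<noteq> []" and "set C \<subseteq> U" using C by (auto simp: shortest_cycle_in_def cycle_def)
  hence "hd C \<in> U" by auto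
  hence "3 \<le> card {u\<in>U. E (hd C) u}" using deg by (simp add: min_degree_ge_def)
  moreover have "card {C ! 1, last C} \<le> 2" by (simp add: card_insert_le_m1)
  ultimately have "card ({u\<in>U. E (hd C) u} - {C ! 1, last C}) > 0"
    using diff_card_le_card_Diff[of "{C ! 1, last C}" "{u\<in>U. E (hd C) u}"] by simp
  then obtain z where z: "z \<in> U" "E (hd C) z" "z \<noteq> C ! 1" "z \<noteq> last C"
    by (auto simp: card_gt_0_iff)
  have "z \<notin> set C" using shortest_cycle_hd_neighbour[OF symp C, of z] z irrefl by auto
  thus ?thesis using z by blast
qed

text \<open>Starting from a neighbour \<open>z \<notin> C\<close> of the first vertex \<open>c\<close> of \<open>C\<close>, any further neighbour
\<open>y \<noteq> c\<close> of \<open>z\<close> lies outside \<open>N[C]\<close> by the girth and the minimality of \<open>C\<close>.\<close>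

lemma Diff_cycle_nbhd_nonempty:
  assumes UV: "U \<subseteq> V" and C: "shortest_cycle_in E U C" and deg: "min_degree_ge E U 3"
  shows "U - cycle_nbhd E C U \<noteq> {}"
proof -
  have "C \<noteq> []" and sU: "set C \<subseteq> U" using C by (auto simp: shortest_cycle_in_def cycle_def)
  define c where "c = hd C"
  have cC: "c \<in> set C" and cU: "c \<in> U" using \<open>C \<noteq> []\<close> sU by (auto simp: c_def)
  obtain z where z: "z \<in> U" "z \<notin> set C" "E c z"
    using shortest_cycle_hd_neighbour_outside[OF UV C deg] by (auto simp: c_def)
  have "3 \<le> card {u\<in>U. E z u}" using deg z by (simp add: min_degree_ge_def)
  hence "card ({u\<in>U. E z u} - {c}) > 0"
    using diff_card_le_card_Diff[of "{c}" "{u\<in>U. E z u}"] by simp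
  then obtain y where y: "y \<in> U" "E z y" "y \<noteq> c" by (auto simp: card_gt_0_iff)
  have yz: "y \<noteq> z" using y irrefl by auto
  have yC: "y \<notin> set C"
    using shortest_cycle_no_short_detour[OF UV C _ cC y(3), of "[z]"] z y by auto
  have "\<not> E y c'" if c': "c' \<in> set C" for c'
  proof
    assume Ey: "E y c'"
    show False
    proof (cases "c' = c")
      case True
      hence "cycle E [c, z, y]" unfolding cycle_def using z y yz yC cC Ey by auto
      thus False using length_cycle_ge_9[of "[c, z, y]"] z y cU UV by auto
    next
      case False
      show False
        by (rule shortest_cycle_no_short_detour[OF UV C c' cC False, of "[z, y]"])
           (use z y yz yC Ey in auto)
    qed
  qed
  hence "y \<in> U - cycle_nbhd E C U" using y yC by (auto simp: cycle_nbhd_def)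
  thus ?thesis by blast
qed

lemma independent_cycles_if_min_degree:
  assumes "U \<subseteq> V" "U \<noteq> {}" "min_degree_ge E U (Suc k)"
  shows "\<exists>Cs. length Cs = k \<and> independent_cycles E U Cs"
  using assms
proof (induction k arbitrary: U)
  case 0
  show ?case by (auto simp: independent_cycles_def)
next
  case (Suc k)
  have "min_degree_ge E U 2" using Suc.prems(3) by (auto simp: min_degree_ge_def)
  then obtain C where C: "shortest_cycle_in E U C"
    using exists_cycle_if_min_degree_2[OF Suc.prems(1,2)] exists_shortest_cycle_in by blast
  define U' where "U' = U - cycle_nbhd E C U"
  have U'U: "U' \<subseteq> U" by (auto simp: U'_def)
  obtain Cs where Cs: "length Cs = k" "independent_cycles E U' Cs"
  proof (cases k)
    case 0
    thus thesis using that[of "[]"] by (simp add: independent_cycles_def)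
  next
    case (Suc k')
    have "min_degree_ge E U 3" using Suc.prems(3) Suc by (auto simp: min_degree_ge_def)
    hence "U' \<noteq> {}" using Diff_cycle_nbhd_nonempty[OF Suc.prems(1) C] by (simp add: U'_def)
    moreover have "min_degree_ge E U' (Suc k)"
      using min_degree_Diff_cycle_nbhd[OF Suc.prems(1) C Suc.prems(3)] by (simp add: U'_def)
    ultimately show thesis using that Suc.IH[of U'] U'U Suc.prems(1) by blast
  qed
  moreover have "U' \<inter> set C = {}" "independent_sets E U' (set C)" "independent_sets E (set C) U'"
    using symp by (auto simp: U'_def cycle_nbhd_def independent_sets_def dest: sympD)
  ultimately have "independent_cycles E U (C # Cs)"
    using independent_cycles_Cons[of E U' Cs C U] C U'U by (simp add: shortest_cycle_in_def)
  thus ?case using Cs(1) by (intro exI[of _ "C # Cs"]) simp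
qed

lemma card_edges_le_if_O_free:
  assumes "O_free V E k"
  shows "card (edges E) \<le> k * card V"
proof (rule ccontr)
  assume "\<not> card (edges E) \<le> k * card V"
  moreover have "edges_within V = edges E"
    using simple_graph unfolding edges_within_def edges_def simple_graph_def by blast
  ultimately have "k * card V < card (edges_within V)" by simp
  then obtain W where W: "W \<subseteq> V" "W \<noteq> {}" "min_degree_ge E W (Suc k)"
    using exists_subgraph_min_degree[OF finite_V] by blast
  then obtain Cs where "length Cs = k" "independent_cycles E W Cs"
    using independent_cycles_if_min_degree by blast
  hence "length Cs = k" "independent_cycles E V Cs" using independent_cycles_mono W(1) by blast+
  thus False using assms by (auto simp: O_free_iff_no_independent_cycles)
qed

end

theorem mainTheorem9:
  fixes V :: "'a set" and E :: "'a \<Rightarrow> 'a \<Rightarrow> bool" and k :: nat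
  assumes "k \<ge> 1"
    and "simple_graph V E"
    and "O_free V E k"
    and "girth_at_least V E 11"
  shows "2 * real (card (edges E)) / real (card V) \<le> 2 * real k"
proof -
  have "girth_at_least V E 9"
    using assms(4) by (auto simp: girth_at_least_def)
  then interpret girth9_graph V E
    using assms(2) by unfold_locales
  have "real (card (edges E)) \<le> real k * real (card V)"
    using card_edges_le_if_O_free[OF assms(3)] by (simp flip: of_nat_mult)
  moreover have "card V > 0"
    using assms(2) by (simp add: simple_graph_def card_gt_0_iff)
  ultimately show ?thesis by (simp add: pos_divide_le_eq)
qed

end
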